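(* For every $\rho>0$, every $\delta\in(0,1)$, and every $\Delta_0\in\mathbb{N}$, the Weighted Gaussian mechanism $\mathrm{WG}_{\rho,\delta,\Delta_0}$ satisfies $\delta$-approximate $\rho$-zCDP, where neighboring datasets are those differing by the addition or removal of one user's list.
   Context: Let $\mathcal{U}$ be a (possibly infinite) universe of items. A dataset is a finite sequence $x=(W_1,\dots,W_N)$ of user lists $W_i\in\mathcal{U}^*$ (finite lists of items). Datasets $x,x'$ are neighbors if one is obtained from the other by adding one user list. Let $\Phi$ be the standard normal CDF and $\Phi^{-1}$ its inverse; $[\Delta_0]=\{1,\dots,\Delta_0\}$. The Weighted Gaussian mechanism $\mathrm{WG}_{\rho,\delta,\Delta_0}(x)$: (1) For each user $i$, remove duplicates from $W_i$, and let $\overline W_i$ be a uniformly random subset of at most $\Delta_0$ of the distinct items (all of them if there are at most $\Delta_0$, else $\Delta_0$ chosen uniformly without replacement). (2) Form the histogram $H[u]=\sum_{i:\,u\in\overline W_i}1/\sqrt{|\overline W_i|}$ for every $u\in\bigcup_i\overline W_i$. (3) Set $\sigma=1/\sqrt{2\rho}$ and threshold $T=\max_{k\in[\Delta_0]}\bigl\{1/\sqrt{k}+\sigma\,\Phi^{-1}\bigl((1-\delta)^{1/k}\bigr)\bigr\}$. (4) For each $u$ in the support of $H$, independently draw $Z_u\sim\mathcal{N}(0,1/(2\rho))$ and output the set $S=\{u: H[u]+Z_u\ge T\}$. For distributions $P,Q$ and $\alpha\in(1,\infty)$, the Rényi divergence is $D_\alpha(P\|Q)=\frac{1}{\alpha-1}\log\bigl(\sum_s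 P(s)^\alpha Q(s)^{1-\alpha}\bigr)$. A mechanism $\mathcal{M}$ satisfies $\delta$-approximate $\rho$-zCDP if for all neighboring $x,x'$ there exist events $E$ (depending on $\mathcal{M}(x)$) and $E'$ (depending on $\mathcal{M}(x')$) with $\Pr[E]\ge1-\delta$, $\Pr[E']\ge1-\delta$, such that for all $\alpha\in(1,\infty)$, $D_\alpha(\mathcal{M}(x)|_E\|\mathcal{M}(x')|_{E'})\le\rho\alpha$ and $D_\alpha(\mathcal{M}(x')|_{E'}\|\mathcal{M}(x)|_{E})\le\rho\alpha$, where $|_E$ denotes conditioning on $E$. *)

theory Defs
  imports "HOL-Probability.Probability"
begin

definition Phi :: "real \<Rightarrow> real" where
  "Phi x = measure (density lborel std_normal_density) {..x}"

definition Phi_inv :: "real \<Rightarrow> real" where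
  "Phi_inv p = (THE x. Phi x = p)"

definition sample_user :: "nat \<Rightarrow> 'a list \<Rightarrow> 'a set pmf" where
  "sample_user \<Delta>0 W =
     (if card (set W) \<le> \<Delta>0 then return_pmf (set W)
      else pmf_of_set {A. A \<subseteq> set W \<and> card A = \<Delta>0})"

fun sample_users :: "nat \<Rightarrow> 'a list list \<Rightarrow> 'a set list pmf" where
  "sample_users \<Delta>0 [] = return_pmf []"
| "sample_users \<Delta>0 (W # Ws) =
     bind_pmf (sample_user \<Delta>0 W) (\<lambda>A. bind_pmf (sample_users \<Delta>0 Ws) (\<lambda>As. return_pmf (A # As)))"

definition hist :: "'a set list \<Rightarrow> 'a \<Rightarrow> real" where
  "hist As u = sum_list (map (\<lambda>A. if u \<in> A then 1 / sqrt (real (card A)) else 0) As)"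

definition wg_sigma :: "real \<Rightarrow> real" where
  "wg_sigma \<rho> = 1 / sqrt (2 * \<rho>)"

definition wg_threshold :: "real \<Rightarrow> real \<Rightarrow> nat \<Rightarrow> real" where
  "wg_threshold \<rho> \<delta> \<Delta>0 =
     Max ((\<lambda>k::nat. 1 / sqrt (real k) + wg_sigma \<rho> * Phi_inv ((1 - \<delta>) powr (1 / real k))) ` {1..\<Delta>0})"

text \<open>Step (4): for each item u in the support, Z_u ~ N(0, 1/(2 rho)) independently, and u is
  output iff hist u + Z_u >= T.  The event for u has probability
  P[Z_u >= T - hist u]; the output set is distributed as the set of successes of
  independent Bernoulli trials with these probabilities.\<close>
definition pass_prob :: "real \<Rightarrow> real \<Rightarrow> real \<Rightarrow> real" where
  "pass_prob \<sigma> T h = measure (density lborel (normal_density 0 \<sigma>)) {z. h + z \<ge> T}"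

definition WG :: "real \<Rightarrow> real \<Rightarrow> nat \<Rightarrow> 'a list list \<Rightarrow> 'a set pmf" where
  "WG \<rho> \<delta> \<Delta>0 x =
     bind_pmf (sample_users \<Delta>0 x) (\<lambda>As.
       map_pmf (\<lambda>f. {u \<in> \<Union>(set As). f u})
         (Pi_pmf (\<Union>(set As)) False
            (\<lambda>u. bernoulli_pmf (pass_prob (wg_sigma \<rho>) (wg_threshold \<rho> \<delta> \<Delta>0) (hist As u)))))"

definition add_user :: "'a list list \<Rightarrow> 'a list list \<Rightarrow> bool" where
  "add_user x x' \<longleftrightarrow> (\<exists>i W. i \<le> length x \<and> x' = take i x @ W # drop i x)"

definition neighbors :: "'a list list \<Rightarrow> 'a list list \<Rightarrow> bool" where
  "neighbors x x' \<longleftrightarrow> add_user x x' \<or> add_user x' x"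

definition renyi_div :: "real \<Rightarrow> 'b pmf \<Rightarrow> 'b pmf \<Rightarrow> ereal" where
  "renyi_div \<alpha> P Q =
     (if set_pmf P \<subseteq> set_pmf Q \<and>
         (\<lambda>s. pmf P s powr \<alpha> * pmf Q s powr (1 - \<alpha>)) summable_on set_pmf P
      then ereal (1 / (\<alpha> - 1) *
             ln (\<Sum>\<^sub>\<infinity>s\<in>set_pmf P. pmf P s powr \<alpha> * pmf Q s powr (1 - \<alpha>)))
      else \<infinity>)"

text \<open>cond_on_event delta P Q: Q is the distribution P conditioned on an event E of
  probability at least 1 - delta.  An event E on the mechanism's random coins is described
  by the conditional probability e s = Pr[E | output = s]; then Pr[E] = sum_s P(s) e(s) and
  (P|_E)(s) = P(s) e(s) / Pr[E].\<close>
definition cond_on_event :: "real \<Rightarrow> 'b pmf \<Rightarrow> 'b pmf \<Rightarrow> bool" where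
  "cond_on_event \<delta> P Q \<longleftrightarrow>
     (\<exists>e :: 'b \<Rightarrow> real. (\<forall>s. 0 \<le> e s \<and> e s \<le> 1) \<and>
        (\<lambda>s. pmf P s * e s) summable_on UNIV \<and>
        (\<Sum>\<^sub>\<infinity>s. pmf P s * e s) \<ge> 1 - \<delta> \<and>
        (\<forall>s. pmf Q s = pmf P s * e s / (\<Sum>\<^sub>\<infinity>t. pmf P t * e t)))"

definition approx_zCDP :: "real \<Rightarrow> real \<Rightarrow> ('d \<Rightarrow> 'd \<Rightarrow> bool) \<Rightarrow> ('d \<Rightarrow> 'b pmf) \<Rightarrow> bool" where
  "approx_zCDP \<delta> \<rho> nbr M \<longleftrightarrow>
     (\<forall>x x'. nbr x x' \<longrightarrow>
        (\<exists>Q Q'. cond_on_event \<delta> (M x) Q \<and> cond_on_event \<delta> (M x') Q' \<and>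
           (\<forall>\<alpha>>1. renyi_div \<alpha> Q Q' \<le> ereal (\<rho> * \<alpha>) \<and>
                   renyi_div \<alpha> Q' Q \<le> ereal (\<rho> * \<alpha>))))"

end

theory Submission
  imports Defs
begin

text \<open>Couple the subsampling of neighbouring datasets L @ R and L @ W # R. Given the samples,
  both outputs are sets of independent thresholded Gaussians. The items only the added user
  holds all have weight 1/sqrt k, where k \<le> \<Delta>0 is the size of that user's sample, and the
  threshold is chosen so that they all fail with probability at least 1 - \<delta>. Conditioning the
  larger dataset on that event, and the smaller one on an independent coin of the same bias,
  leaves two mixtures with common weights whose components are thresholded Gaussians on a
  common ground set, with mean vectors at l2-distance at most 1. Thresholding is
  post-processing and the Renyi divergence is jointly quasi-convex, so both divergences of
  order \<alpha> are at most \<rho> \<alpha>.\<close>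

section \<open>Gaussian tail probabilities\<close>

lemma integrable_indicator_normal_density:
  assumes "0 < \<sigma>" and "A \<in> sets borel"
  shows "integrable lborel (\<lambda>x. indicator A x * normal_density \<mu> \<sigma> x)"
  using integrable_real_mult_indicator[OF _ integrable_normal_density[OF assms(1)], of A] assms(2)
  by (simp add: mult.commute)

lemma measure_normal_density_eq_integral:
  assumes "0 < \<sigma>" and "A \<in> sets borel"
  shows "measure (density lborel (normal_density \<mu> \<sigma>)) A =
    (\<integral>x. indicator A x * normal_density \<mu> \<sigma> x \<partial>lborel)"
proof -
  have "emeasure (density lborel (normal_density \<mu> \<sigma>)) A =
      (\<integral>\<^sup>+ x. ennreal (indicator A x * normal_density \<mu> \<sigma> x) \<partial>lborel)"
    using assms by (simp add: emeasure_density indicator_mult_ennreal mult.commute)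
  also have "\<dots> = ennreal (\<integral>x. indicator A x * normal_density \<mu> \<sigma> x \<partial>lborel)"
    using assms by (intro nn_integral_eq_integral integrable_indicator_normal_density) auto
  finally show ?thesis
    by (simp add: measure_def integral_nonneg_AE)
qed

lemma pass_prob_eq_integral:
  assumes "0 < \<sigma>"
  shows "pass_prob \<sigma> T h = (\<integral>y. indicator {T..} y * normal_density h \<sigma> y \<partial>lborel)"
proof -
  have "pass_prob \<sigma> T h = (\<integral>z. indicator {z. h + z \<ge> T} z * normal_density 0 \<sigma> z \<partial>lborel)"
    unfolding pass_prob_def by (rule measure_normal_density_eq_integral[OF assms]) measurable
  also have "\<dots> = (\<integral>y. indicator {z. h + z \<ge> T} (-h + y) * normal_density 0 \<sigma> (-h + y) \<partial>lborel)"
    using lborel_integral_real_affine[of 1 "\<lambda>z. indicator {z. h + z \<ge> T} z * normal_density 0 \<sigma> z" "-h"]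
    by simp
  also have "\<dots> = (\<integral>y. indicator {T..} y * normal_density h \<sigma> y \<partial>lborel)"
    by (intro Bochner_Integration.integral_cong refl)
      (auto simp: indicator_def normal_density_def algebra_simps)
  finally show ?thesis .
qed

lemma one_minus_pass_prob_eq_integral:
  assumes "0 < \<sigma>"
  shows "1 - pass_prob \<sigma> T h = (\<integral>y. indicator {..<T} y * normal_density h \<sigma> y \<partial>lborel)"
proof -
  have "(\<integral>y. normal_density h \<sigma> y \<partial>lborel) = (\<integral>y. indicator {T..} y * normal_density h \<sigma> y +
                indicator {..<T} y * normal_density h \<sigma> y \<partial>lborel)"
    by (intro Bochner_Integration.integral_cong) (auto simp: indicator_def)
  then have "1 = (\<integral>y. indicator {T..} y * normal_density h \<sigma> y +
                indicator {..<T} y * normal_density h \<sigma> y \<partial>lborel)"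
    using integral_normal_density[OF assms, of h] by simp
  also have "\<dots> = pass_prob \<sigma> T h + (\<integral>y. indicator {..<T} y * normal_density h \<sigma> y \<partial>lborel)"
    using assms by (simp add: pass_prob_eq_integral integrable_indicator_normal_density)
  finally show ?thesis by simp
qed

lemma normal_density_powr_mult_powr:
  assumes "0 < \<sigma>"
  shows "normal_density a \<sigma> y powr \<alpha> * normal_density b \<sigma> y powr (1 - \<alpha>) =
    exp (\<alpha> * (\<alpha> - 1) * (a - b)\<^sup>2 / (2 * \<sigma>\<^sup>2)) * normal_density (\<alpha> * a + (1 - \<alpha>) * b) \<sigma> y"
proof -
  define K where "K = 1 / sqrt (2 * pi * \<sigma>\<^sup>2)"
  have "K > 0" using assms by (simp add: K_def)
  then have K_exp_powr: "(K * exp u) powr \<alpha> * (K * exp v) powr (1 - \<alpha>) = K * exp (\<alpha> * u + (1 - \<alpha>) * v)"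
    for u v by (simp add: powr_mult exp_powr_real powr_add[symmetric] exp_add[symmetric] algebra_simps)
  have "\<alpha> * (-(y - a)\<^sup>2 / (2 * \<sigma>\<^sup>2)) + (1 - \<alpha>) * (-(y - b)\<^sup>2 / (2 * \<sigma>\<^sup>2)) =
      \<alpha> * (\<alpha> - 1) * (a - b)\<^sup>2 / (2 * \<sigma>\<^sup>2) + (-(y - (\<alpha> * a + (1 - \<alpha>) * b))\<^sup>2 / (2 * \<sigma>\<^sup>2))"
    using assms by (simp add: field_simps power2_eq_square)
  then show ?thesis
    unfolding normal_density_def K_def[symmetric] K_exp_powr
    by (simp add: exp_add[symmetric])
qed

lemma integrable_indicator_normal_density_powr:
  assumes "0 < \<sigma>" and "A \<in> sets borel"
  shows "integrable lborel
    (\<lambda>y. indicator A y * (normal_density a \<sigma> y powr \<alpha> * normal_density b \<sigma> y powr (1 - \<alpha>)))"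
  unfolding normal_density_powr_mult_powr[OF assms(1)]
  by (subst mult.left_commute, intro integrable_mult_right integrable_indicator_normal_density assms)

lemma integral_indicator_normal_density_pos:
  assumes "0 < \<sigma>" and A: "A \<in> sets borel" and "emeasure lborel A > 0"
  shows "0 < (\<integral>y. indicator A y * normal_density h \<sigma> y \<partial>lborel)"
proof -
  have "(\<integral>y. indicator A y * normal_density h \<sigma> y \<partial>lborel) \<noteq> 0"
  proof
    assume "(\<integral>y. indicator A y * normal_density h \<sigma> y \<partial>lborel) = 0"
    then have "AE y in lborel. indicator A y * normal_density h \<sigma> y = 0"
      using integral_nonneg_eq_0_iff_AE[OF integrable_indicator_normal_density[OF assms(1,2)]]
      by auto
    then have "AE y in lborel. y \<notin> A"
    proof (rule AE_mp, intro AE_I2 impI)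
      fix y assume "indicator A y * normal_density h \<sigma> y = 0"
      then show "y \<notin> A"
        using normal_density_pos[OF assms(1), of h y] by (auto simp: indicator_def split: if_splits)
    qed
    then have "emeasure lborel A = 0"
      using AE_iff_measurable[of A lborel "\<lambda>y. y \<notin> A"] A by auto
    with assms(3) show False by simp
  qed
  moreover have "0 \<le> (\<integral>y. indicator A y * normal_density h \<sigma> y \<partial>lborel)"
    by (intro integral_nonneg_AE) auto
  ultimately show ?thesis by linarith
qed

lemma pass_prob_gt_0:
  assumes "0 < \<sigma>"
  shows "0 < pass_prob \<sigma> T h"
proof -
  have "emeasure lborel {T..T+1} \<le> emeasure lborel {T..}" by (intro emeasure_mono) auto
  then have "emeasure lborel {T..} > 0" by (rule order.strict_trans2[rotated]) simp
  then show ?thesis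
    using assms by (simp add: pass_prob_eq_integral integral_indicator_normal_density_pos)
qed

lemma pass_prob_lt_1:
  assumes "0 < \<sigma>"
  shows "pass_prob \<sigma> T h < 1"
proof -
  have "emeasure lborel {T-2..T-1} \<le> emeasure lborel {..<T}" by (intro emeasure_mono) auto
  then have "emeasure lborel {..<T} > 0" by (rule order.strict_trans2[rotated]) simp
  then show ?thesis
    using assms one_minus_pass_prob_eq_integral[of \<sigma> T h]
      integral_indicator_normal_density_pos[of \<sigma> "{..<T}" h]
    by simp
qed

lemma powr_integral_indicator_normal_density_le:
  assumes \<sigma>: "0 < \<sigma>" and \<alpha>: "1 < \<alpha>" and A: "A \<in> sets borel"
    and Ib_pos: "0 < (\<integral>y. indicator A y * normal_density b \<sigma> y \<partial>lborel)"
  shows "(\<integral>y. indicator A y * normal_density a \<sigma> y \<partial>lborel) powr \<alpha> *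
         (\<integral>y. indicator A y * normal_density b \<sigma> y \<partial>lborel) powr (1 - \<alpha>)
       \<le> (\<integral>y. indicator A y * (normal_density a \<sigma> y powr \<alpha> * normal_density b \<sigma> y powr (1 - \<alpha>)) \<partial>lborel)"
    (is "?Ia powr \<alpha> * ?Ib powr (1 - \<alpha>) \<le> ?Iab")
proof -
  define g where "g y = indicator A y * normal_density b \<sigma> y / ?Ib" for y
  define X where "X y = normal_density a \<sigma> y / normal_density b \<sigma> y" for y
  have [measurable]: "g \<in> borel_measurable borel" "X \<in> borel_measurable borel"
    using A unfolding g_def[abs_def] X_def[abs_def] by measurable
  have g_nonneg: "0 \<le> g y" for y using Ib_pos by (simp add: g_def)
  interpret M: prob_space "density lborel g"
  proof
    have "emeasure (density lborel g) (space (density lborel g)) = (\<integral>\<^sup>+ y. ennreal (g y) \<partial>lborel)"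
      by (simp add: emeasure_density)
    also have "\<dots> = ennreal (\<integral>y. g y \<partial>lborel)"
      using g_nonneg unfolding g_def
      by (intro nn_integral_eq_integral integrable_divide integrable_indicator_normal_density \<sigma> A) auto
    also have "(\<integral>y. g y \<partial>lborel) = 1"
      using Ib_pos unfolding g_def by simp
    finally show "emeasure (density lborel g) (space (density lborel g)) = 1" by simp
  qed
  have gX: "g y * X y = indicator A y * normal_density a \<sigma> y / ?Ib" for y
    using normal_density_pos[OF \<sigma>, of b y] by (simp add: g_def X_def)
  have gX_powr: "g y * X y powr \<alpha> =
      indicator A y * (normal_density a \<sigma> y powr \<alpha> * normal_density b \<sigma> y powr (1 - \<alpha>)) / ?Ib" for y
    using normal_density_pos[OF \<sigma>, of b y]
    by (simp add: g_def X_def powr_divide powr_diff mult_ac)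
  have "M.expectation X powr \<alpha> \<le> M.expectation (\<lambda>y. X y powr \<alpha>)"
  proof (rule M.jensens_inequality[OF _ _ _ _ powr_convex])
    show "integrable (density lborel g) X"
      by (subst integrable_density) (auto simp: g_nonneg gX intro!: integrable_indicator_normal_density \<sigma> A)
    show "integrable (density lborel g) (\<lambda>y. X y powr \<alpha>)"
      by (subst integrable_density)
        (auto simp: g_nonneg gX_powr intro!: integrable_indicator_normal_density_powr \<sigma> A)
    show "AE y in density lborel g. X y \<in> {0<..}"
      using normal_density_pos[OF \<sigma>] by (auto simp: X_def)
  qed (use \<alpha> in auto)
  moreover have "M.expectation X = ?Ia / ?Ib"
    by (subst integral_density) (auto simp: g_nonneg gX)
  moreover have "M.expectation (\<lambda>y. X y powr \<alpha>) = ?Iab / ?Ib"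
    by (subst integral_density) (auto simp: g_nonneg gX_powr)
  ultimately have "?Ib * (?Ia / ?Ib) powr \<alpha> \<le> ?Ib * (?Iab / ?Ib)"
    using Ib_pos by (intro mult_left_mono) auto
  moreover have "?Ia powr \<alpha> * ?Ib powr (1 - \<alpha>) = ?Ib * (?Ia / ?Ib) powr \<alpha>"
    using Ib_pos by (simp add: powr_divide powr_diff)
  ultimately show ?thesis
    using Ib_pos by simp
qed

text \<open>Data processing for the partition of the line at T: thresholding Gaussians with means a
  and b does not increase their Renyi divergence \<alpha> (a - b)^2 / (2 \<sigma>^2).\<close>
lemma pass_prob_renyi_sum_le:
  assumes \<sigma>: "0 < \<sigma>" and \<alpha>: "1 < \<alpha>"
  shows "pass_prob \<sigma> T a powr \<alpha> * pass_prob \<sigma> T b powr (1 - \<alpha>) +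
         (1 - pass_prob \<sigma> T a) powr \<alpha> * (1 - pass_prob \<sigma> T b) powr (1 - \<alpha>)
       \<le> exp (\<alpha> * (\<alpha> - 1) * (a - b)\<^sup>2 / (2 * \<sigma>\<^sup>2))"
proof -
  let ?f = "\<lambda>y. normal_density a \<sigma> y powr \<alpha> * normal_density b \<sigma> y powr (1 - \<alpha>)"
  have "pass_prob \<sigma> T a powr \<alpha> * pass_prob \<sigma> T b powr (1 - \<alpha>) \<le> (\<integral>y. indicator {T..} y * ?f y \<partial>lborel)"
    unfolding pass_prob_eq_integral[OF \<sigma>]
    by (intro powr_integral_indicator_normal_density_le \<sigma> \<alpha>)
      (use pass_prob_gt_0[OF \<sigma>, of T b] in \<open>auto simp: pass_prob_eq_integral[OF \<sigma>]\<close>)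
  moreover have "(1 - pass_prob \<sigma> T a) powr \<alpha> * (1 - pass_prob \<sigma> T b) powr (1 - \<alpha>) \<le>
      (\<integral>y. indicator {..<T} y * ?f y \<partial>lborel)"
    unfolding one_minus_pass_prob_eq_integral[OF \<sigma>]
    by (intro powr_integral_indicator_normal_density_le \<sigma> \<alpha>)
      (use pass_prob_lt_1[OF \<sigma>, of T b] one_minus_pass_prob_eq_integral[OF \<sigma>, of T b] in auto)
  moreover have "(\<integral>y. indicator {T..} y * ?f y \<partial>lborel) + (\<integral>y. indicator {..<T} y * ?f y \<partial>lborel)
      = (\<integral>y. indicator {T..} y * ?f y + indicator {..<T} y * ?f y \<partial>lborel)"
    by (intro Bochner_Integration.integral_add[symmetric] integrable_indicator_normal_density_powr \<sigma>) auto
  moreover have "\<dots> = (\<integral>y. ?f y \<partial>lborel)"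
    by (intro Bochner_Integration.integral_cong) (auto simp: indicator_def)
  moreover have "\<dots> = exp (\<alpha> * (\<alpha> - 1) * (a - b)\<^sup>2 / (2 * \<sigma>\<^sup>2))"
    unfolding normal_density_powr_mult_powr[OF \<sigma>] using integral_normal_density[OF \<sigma>] by simp
  ultimately show ?thesis by linarith
qed

section \<open>The standard normal distribution function\<close>

lemma Phi_eq_cdf: "Phi = cdf (density lborel std_normal_density)"
  by (simp add: Phi_def cdf_def fun_eq_iff)

interpretation std_normal: real_distribution "density lborel std_normal_density"
proof -
  interpret prob_space "density lborel std_normal_density"
    by (rule prob_space_normal_density) simp
  show "real_distribution (density lborel std_normal_density)" by standard simp
qed

lemma Phi_eq_integral_lessThan:
  "Phi x = (\<integral>t. indicator {..<x} t * std_normal_density t \<partial>lborel)"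
proof -
  have "Phi x = (\<integral>t. indicator {..x} t * std_normal_density t \<partial>lborel)"
    unfolding Phi_def by (rule measure_normal_density_eq_integral) auto
  also have "\<dots> = (\<integral>t. indicator {..<x} t * std_normal_density t \<partial>lborel)"
    by (rule integral_cong_AE)
      (use AE_lborel_singleton[of x] in \<open>auto elim!: eventually_mono simp: indicator_def\<close>)
  finally show ?thesis .
qed

lemma isCont_Phi: "isCont Phi x"
  unfolding Phi_eq_cdf std_normal.isCont_cdf
proof -
  have "measure (density lborel std_normal_density) {x} =
      (\<integral>y. indicator {x} y * std_normal_density y \<partial>lborel)"
    by (rule measure_normal_density_eq_integral) simp_all
  also have "\<dots> = 0"
    by (rule integral_eq_zero_AE) (use AE_lborel_singleton[of x] in \<open>eventually_elim, auto\<close>)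
  finally show "measure (density lborel std_normal_density) {x} = 0" .
qed

lemma Phi_strict_mono: "strict_mono Phi"
proof
  fix x y :: real assume "x < y"
  then have "Phi y - Phi x = measure (density lborel std_normal_density) {x<..y}"
    unfolding Phi_eq_cdf by (rule std_normal.cdf_diff_eq)
  also have "\<dots> = (\<integral>t. indicator {x<..y} t * std_normal_density t \<partial>lborel)"
    by (rule measure_normal_density_eq_integral) auto
  also have "\<dots> > 0"
    using \<open>x < y\<close> by (intro integral_indicator_normal_density_pos) auto
  finally show "Phi x < Phi y" by simp
qed

lemma Phi_Phi_inv:
  assumes "0 < p" "p < 1"
  shows "Phi (Phi_inv p) = p"
proof -
  have "(Phi \<longlongrightarrow> 0) at_bot" "(Phi \<longlongrightarrow> 1) at_top"
    unfolding Phi_eq_cdf by (rule std_normal.cdf_lim_at_bot, rule std_normal.cdf_lim_at_top_prob)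
  then have ev: "eventually (\<lambda>x. Phi x < p) at_bot" "eventually (\<lambda>x. Phi x > p) at_top"
    using assms by (auto intro: order_tendstoD)
  obtain a where a: "Phi a < p" using ev(1) by (auto simp: eventually_at_bot_linorder)
  obtain b where b: "Phi b > p" using ev(2) by (auto simp: eventually_at_top_linorder)
  have "a \<le> b"
    using a b strict_mono_less[OF Phi_strict_mono, of b a] by (auto simp: not_less[symmetric])
  then obtain x where x: "Phi x = p"
    using IVT[of Phi a p b] a b isCont_Phi by auto
  moreover have "Phi_inv p = x"
    unfolding Phi_inv_def using x strict_mono_eq[OF Phi_strict_mono] by blast
  ultimately show ?thesis by simp
qed

lemma one_minus_pass_prob_eq_Phi:
  assumes \<sigma>: "0 < \<sigma>"
  shows "1 - pass_prob \<sigma> T h = Phi ((T - h) / \<sigma>)"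
proof -
  have density: "normal_density h \<sigma> (h + \<sigma> * t) = std_normal_density t / \<sigma>" for t
  proof -
    have "(h + \<sigma> * t - h)\<^sup>2 / (2 * \<sigma>\<^sup>2) = t\<^sup>2 / 2"
      using \<sigma> by (simp add: power_mult_distrib)
    moreover have "sqrt (2 * pi * \<sigma>\<^sup>2) = sqrt (2 * pi) * \<sigma>"
      using \<sigma> by (simp add: real_sqrt_mult)
    ultimately show ?thesis
      unfolding normal_density_def by simp
  qed
  have "1 - pass_prob \<sigma> T h = (\<integral>y. indicator {..<T} y * normal_density h \<sigma> y \<partial>lborel)"
    by (rule one_minus_pass_prob_eq_integral[OF \<sigma>])
  also have "\<dots> = \<sigma> * (\<integral>t. indicator {..<T} (h + \<sigma> * t) * normal_density h \<sigma> (h + \<sigma> * t) \<partial>lborel)"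
    using lborel_integral_real_affine[of \<sigma> "\<lambda>y. indicator {..<T} y * normal_density h \<sigma> y" h] \<sigma>
    by simp
  also have "\<dots> = \<sigma> * (\<integral>t. indicator {..<(T - h) / \<sigma>} t * std_normal_density t / \<sigma> \<partial>lborel)"
    by (intro arg_cong2[where f = "(*)"] Bochner_Integration.integral_cong refl, subst density)
      (use \<sigma> in \<open>simp add: indicator_def field_simps\<close>)
  also have "\<dots> = (\<integral>t. indicator {..<(T - h) / \<sigma>} t * std_normal_density t \<partial>lborel)"
    using \<sigma> by simp
  also have "\<dots> = Phi ((T - h) / \<sigma>)"
    by (rule Phi_eq_integral_lessThan[symmetric])
  finally show ?thesis .
qed

section \<open>Renyi divergence of mixtures\<close>

lemma convex_on_powr_nonneg:
  assumes \<alpha>: "1 \<le> \<alpha>"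
  shows "convex_on {0..} (\<lambda>x::real. x powr \<alpha>)"
proof
  have powr_le_self: "s powr \<alpha> \<le> s" if "0 \<le> s" "s \<le> 1" for s :: real
  proof (cases "s = 0")
    case False
    then have "s powr \<alpha> \<le> s powr 1" using that \<alpha> by (intro powr_mono') auto
    then show ?thesis using that by simp
  qed simp
  fix t x y :: real assume t: "0 < t" "t < 1" and xy: "x \<in> {0..}" "y \<in> {0..}"
  consider "x = 0" | "y = 0" | "x > 0" "y > 0" using xy by force
  then show "((1 - t) *\<^sub>R x + t *\<^sub>R y) powr \<alpha> \<le> (1 - t) * x powr \<alpha> + t * y powr \<alpha>"
  proof cases
    case 1
    have "t powr \<alpha> * y powr \<alpha> \<le> t * y powr \<alpha>" using powr_le_self t by (intro mult_right_mono) auto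
    then show ?thesis using 1 \<alpha> by (simp add: powr_mult)
  next
    case 2
    have "(1 - t) powr \<alpha> * x powr \<alpha> \<le> (1 - t) * x powr \<alpha>"
      using powr_le_self t by (intro mult_right_mono) auto
    then show ?thesis using 2 \<alpha> by (simp add: powr_mult)
  next
    case 3
    then show ?thesis using convex_onD[OF powr_convex[OF \<alpha>], of t x y] t by simp
  qed
qed simp

lemma powr_mult_powr_scale:
  fixes v a b :: real
  assumes "0 \<le> v"
  shows "(v * a) powr \<alpha> * (v * b) powr (1 - \<alpha>) = v * (a powr \<alpha> * b powr (1 - \<alpha>))"
proof -
  have "v powr \<alpha> * v powr (1 - \<alpha>) = v"
    using assms by (cases "v = 0") (simp_all add: powr_add[symmetric])
  then show ?thesis by (simp add: powr_mult mult_ac)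
qed

text \<open>The function (a, b) \<mapsto> a^\<alpha> b^(1-\<alpha>) is convex and positively homogeneous,
  hence subadditive.\<close>
lemma add_powr_mult_powr_le:
  fixes a1 a2 b1 b2 \<alpha> :: real
  assumes \<alpha>: "1 \<le> \<alpha>" and nonneg: "0 \<le> a1" "0 \<le> a2" "0 \<le> b1" "0 \<le> b2"
    and "b1 = 0 \<Longrightarrow> a1 = 0" and "b2 = 0 \<Longrightarrow> a2 = 0"
  shows "(a1 + a2) powr \<alpha> * (b1 + b2) powr (1 - \<alpha>) \<le>
    a1 powr \<alpha> * b1 powr (1 - \<alpha>) + a2 powr \<alpha> * b2 powr (1 - \<alpha>)"
proof -
  consider "b1 = 0" | "b2 = 0" | "b1 > 0" "b2 > 0" using nonneg by linarith
  then show ?thesis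
  proof cases
    case 3
    define B where "B = b1 + b2"
    define t where "t = b2 / B"
    have B: "B > 0" using 3 by (simp add: B_def)
    have t: "0 \<le> t" "t \<le> 1" and one_minus_t: "1 - t = b1 / B"
      using 3 by (auto simp: t_def B_def field_simps)
    have "(1 - t) * (a1 / b1) = a1 / B" using 3 by (simp add: one_minus_t)
    moreover have "t * (a2 / b2) = a2 / B" using 3 by (simp add: t_def)
    ultimately have "(a1 + a2) / B = (1 - t) * (a1 / b1) + t * (a2 / b2)"
      by (simp add: add_divide_distrib)
    then have "((a1 + a2) / B) powr \<alpha> \<le> (1 - t) * (a1 / b1) powr \<alpha> + t * (a2 / b2) powr \<alpha>"
      using convex_onD[OF convex_on_powr_nonneg[OF \<alpha>], of t "a1 / b1" "a2 / b2"] t nonneg by simp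
    then have "B * ((a1 + a2) / B) powr \<alpha> \<le> B * ((1 - t) * (a1 / b1) powr \<alpha> + t * (a2 / b2) powr \<alpha>)"
      using B by (intro mult_left_mono) auto
    also have "\<dots> = b1 * (a1 / b1) powr \<alpha> + b2 * (a2 / b2) powr \<alpha>"
    proof -
      have "B * (1 - t) = b1" using B by (simp add: one_minus_t)
      moreover have "B * t = b2" using B by (simp add: t_def)
      ultimately show ?thesis by (simp add: distrib_left mult.assoc[symmetric])
    qed
    moreover have "c * (a / c) powr \<alpha> = a powr \<alpha> * c powr (1 - \<alpha>)" if "0 < c" "0 \<le> a" for a c :: real
      using that by (simp add: powr_divide powr_diff)
    ultimately show ?thesis using 3 B nonneg by (simp add: B_def)
  qed (use assms in simp_all)
qed

lemma sum_powr_mult_powr_le: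
  fixes a b :: "'i \<Rightarrow> real"
  assumes \<alpha>: "1 \<le> \<alpha>" and "finite I"
    and "\<And>i. i \<in> I \<Longrightarrow> 0 \<le> a i" "\<And>i. i \<in> I \<Longrightarrow> 0 \<le> b i"
    and "\<And>i. i \<in> I \<Longrightarrow> b i = 0 \<Longrightarrow> a i = 0"
  shows "(\<Sum>i\<in>I. a i) powr \<alpha> * (\<Sum>i\<in>I. b i) powr (1 - \<alpha>) \<le> (\<Sum>i\<in>I. a i powr \<alpha> * b i powr (1 - \<alpha>))"
  using assms(2-)
proof (induction I rule: finite_induct)
  case (insert j I)
  have "sum b I = 0 \<Longrightarrow> sum a I = 0"
    using insert by (subst (asm) sum_nonneg_eq_0_iff) auto
  then have "(a j + sum a I) powr \<alpha> * (b j + sum b I) powr (1 - \<alpha>) \<le>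
      a j powr \<alpha> * b j powr (1 - \<alpha>) + sum a I powr \<alpha> * sum b I powr (1 - \<alpha>)"
    using insert by (intro add_powr_mult_powr_le[OF \<alpha>]) (auto intro: sum_nonneg)
  also have "\<dots> \<le> a j powr \<alpha> * b j powr (1 - \<alpha>) + (\<Sum>i\<in>I. a i powr \<alpha> * b i powr (1 - \<alpha>))"
    using insert by (intro add_left_mono insert.IH) auto
  finally show ?case using insert by simp
qed simp

lemma pmf_bind_pmf_eq_sum:
  assumes "finite A" and "set_pmf M \<subseteq> A"
  shows "pmf (bind_pmf M F) s = (\<Sum>i\<in>A. pmf M i * pmf (F i) s)"
proof -
  have "pmf (bind_pmf M F) s = (\<Sum>i\<in>set_pmf M. pmf M i * pmf (F i) s)"
    unfolding pmf_bind using assms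
    by (subst integral_measure_pmf[of "set_pmf M"]) (auto intro: finite_subset)
  also have "\<dots> = (\<Sum>i\<in>A. pmf M i * pmf (F i) s)"
    using assms by (intro sum.mono_neutral_left) (auto simp: set_pmf_iff)
  finally show ?thesis .
qed

lemma renyi_div_le_if_powr_sum_le:
  fixes P Q :: "'b pmf"
  assumes \<alpha>: "1 < \<alpha>" and fin: "finite (set_pmf P)" and supp: "set_pmf P \<subseteq> set_pmf Q"
    and le: "(\<Sum>s\<in>set_pmf P. pmf P s powr \<alpha> * pmf Q s powr (1 - \<alpha>)) \<le> exp ((\<alpha> - 1) * K)"
  shows "renyi_div \<alpha> P Q \<le> ereal K"
proof -
  let ?F = "\<Sum>s\<in>set_pmf P. pmf P s powr \<alpha> * pmf Q s powr (1 - \<alpha>)"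
  obtain s where s: "s \<in> set_pmf P" using set_pmf_not_empty[of P] by blast
  then have "0 < pmf P s powr \<alpha> * pmf Q s powr (1 - \<alpha>)"
    using supp by (auto simp: set_pmf_iff)
  then have "0 < ?F"
    using fin s by (intro sum_pos2) auto
  with le have "ln ?F \<le> (\<alpha> - 1) * K"
    by (metis ln_exp ln_le_cancel_iff exp_gt_zero)
  then have "1 / (\<alpha> - 1) * ln ?F \<le> K"
    using \<alpha> by (simp add: field_simps)
  then show ?thesis
    unfolding renyi_div_def using supp fin by simp
qed

lemma renyi_div_bind_pmf_le:
  fixes M :: "'i pmf" and P Q :: "'i \<Rightarrow> 'b pmf"
  assumes \<alpha>: "1 < \<alpha>" and M: "finite (set_pmf M)"
    and fin: "\<And>i. i \<in> set_pmf M \<Longrightarrow> finite (set_pmf (P i))"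
    and supp: "\<And>i. i \<in> set_pmf M \<Longrightarrow> set_pmf (P i) \<subseteq> set_pmf (Q i)"
    and le: "\<And>i. i \<in> set_pmf M \<Longrightarrow>
      (\<Sum>s\<in>set_pmf (P i). pmf (P i) s powr \<alpha> * pmf (Q i) s powr (1 - \<alpha>)) \<le> exp ((\<alpha> - 1) * K)"
  shows "renyi_div \<alpha> (bind_pmf M P) (bind_pmf M Q) \<le> ereal K"
proof (rule renyi_div_le_if_powr_sum_le[OF \<alpha>])
  let ?S = "set_pmf (bind_pmf M P)"
  let ?g = "\<lambda>i s. pmf (P i) s powr \<alpha> * pmf (Q i) s powr (1 - \<alpha>)"
  show fin_S: "finite ?S" using M fin by auto
  show "?S \<subseteq> set_pmf (bind_pmf M Q)" using supp by auto
  have "pmf (bind_pmf M P) s powr \<alpha> * pmf (bind_pmf M Q) s powr (1 - \<alpha>) \<le>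
      (\<Sum>i\<in>set_pmf M. pmf M i * ?g i s)" for s
  proof -
    have "(\<Sum>i\<in>set_pmf M. pmf M i * pmf (P i) s) powr \<alpha> * (\<Sum>i\<in>set_pmf M. pmf M i * pmf (Q i) s) powr (1 - \<alpha>)
        \<le> (\<Sum>i\<in>set_pmf M. (pmf M i * pmf (P i) s) powr \<alpha> * (pmf M i * pmf (Q i) s) powr (1 - \<alpha>))"
      using \<alpha> M supp by (intro sum_powr_mult_powr_le) (auto simp: set_pmf_iff subset_iff)
    then show ?thesis
      by (simp add: pmf_bind_pmf_eq_sum[OF M] powr_mult_powr_scale)
  qed
  then have "(\<Sum>s\<in>?S. pmf (bind_pmf M P) s powr \<alpha> * pmf (bind_pmf M Q) s powr (1 - \<alpha>)) \<le>
      (\<Sum>s\<in>?S. \<Sum>i\<in>set_pmf M. pmf M i * ?g i s)"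
    by (rule sum_mono)
  also have "\<dots> = (\<Sum>i\<in>set_pmf M. pmf M i * (\<Sum>s\<in>?S. ?g i s))"
    by (subst sum.swap) (simp add: sum_distrib_left)
  also have "\<dots> \<le> (\<Sum>i\<in>set_pmf M. pmf M i * exp ((\<alpha> - 1) * K))"
  proof (intro sum_mono mult_left_mono)
    fix i assume i: "i \<in> set_pmf M"
    have "(\<Sum>s\<in>?S. ?g i s) = (\<Sum>s\<in>set_pmf (P i). ?g i s)"
      using fin_S i \<alpha> by (intro sum.mono_neutral_right) (auto simp: set_pmf_iff)
    with le[OF i] show "(\<Sum>s\<in>?S. ?g i s) \<le> exp ((\<alpha> - 1) * K)" by simp
  qed simp
  also have "\<dots> = exp ((\<alpha> - 1) * K)"
    using M by (simp add: sum_distrib_right[symmetric] sum_pmf_eq_1)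
  finally show "(\<Sum>s\<in>?S. pmf (bind_pmf M P) s powr \<alpha> * pmf (bind_pmf M Q) s powr (1 - \<alpha>))
      \<le> exp ((\<alpha> - 1) * K)" .
qed

lemma cond_on_event_if_scaled_le:
  fixes P Q :: "'b pmf"
  assumes fin: "finite (set_pmf Q)" and Z: "1 - \<delta> \<le> Z" "0 < Z"
    and le: "\<And>s. Z * pmf Q s \<le> pmf P s"
  shows "cond_on_event \<delta> P Q"
proof -
  \<comment> \<open>The event is accepted with probability Z Q(s) / P(s) given output s.\<close>
  define e where "e s = (if pmf P s = 0 then 0 else Z * pmf Q s / pmf P s)" for s
  have Pe: "pmf P s * e s = Z * pmf Q s" for s
  proof (cases "pmf P s = 0")
    case True
    then have "pmf Q s = 0"
      using le[of s] Z(2) pmf_nonneg[of Q s] by (simp add: mult_le_0_iff)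
    then show ?thesis using True by (simp add: e_def)
  qed (simp add: e_def)
  have e_bounds: "0 \<le> e s \<and> e s \<le> 1" for s
    using le[of s] Z(2) pmf_nonneg[of P s] by (auto simp: e_def divide_le_eq_1)
  have "(\<lambda>s. Z * pmf Q s) summable_on UNIV"
    using fin by (intro summable_on_cong_neutral[THEN iffD1, OF _ _ _ summable_on_finite[OF fin]])
      (auto simp: set_pmf_eq)
  moreover have "(\<Sum>\<^sub>\<infinity>s. Z * pmf Q s) = Z"
  proof -
    have "(\<Sum>\<^sub>\<infinity>s. Z * pmf Q s) = (\<Sum>\<^sub>\<infinity>s\<in>set_pmf Q. Z * pmf Q s)"
      by (intro infsum_cong_neutral) (auto simp: set_pmf_eq)
    also have "\<dots> = (\<Sum>s\<in>set_pmf Q. Z * pmf Q s)"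
      by (rule infsum_finite[OF fin])
    also have "\<dots> = Z"
      using fin by (simp add: sum_distrib_left[symmetric] sum_pmf_eq_1)
    finally show ?thesis .
  qed
  ultimately show ?thesis
    unfolding cond_on_event_def using Z e_bounds by (intro exI[of _ e]) (simp add: Pe)
qed

text \<open>The mixing weights after conditioning on an event that, given component i, holds with
  probability r i.\<close>
definition reweight_pmf :: "'i pmf \<Rightarrow> ('i \<Rightarrow> real) \<Rightarrow> 'i pmf" where
  "reweight_pmf M r = embed_pmf (\<lambda>i. pmf M i * r i / measure_pmf.expectation M r)"

lemma
  fixes M :: "'i pmf"
  assumes M: "finite (set_pmf M)" and r: "\<And>i. i \<in> set_pmf M \<Longrightarrow> 0 < r i"
  shows pmf_reweight_pmf: "pmf (reweight_pmf M r) i = pmf M i * r i / measure_pmf.expectation M r"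
    and set_pmf_reweight_pmf: "set_pmf (reweight_pmf M r) = set_pmf M"
proof -
  let ?E = "measure_pmf.expectation M r"
  let ?f = "\<lambda>i. pmf M i * r i / ?E"
  have E_eq: "?E = (\<Sum>i\<in>set_pmf M. pmf M i * r i)"
    using M by (subst integral_measure_pmf[of "set_pmf M"]) auto
  obtain i0 where "i0 \<in> set_pmf M" using set_pmf_not_empty[of M] by blast
  then have E: "0 < ?E"
    unfolding E_eq using M r by (intro sum_pos2[of _ i0]) (auto simp: set_pmf_iff less_imp_le)
  have f_nonneg: "0 \<le> ?f i" for i
    using r[of i] E by (cases "i \<in> set_pmf M") (auto simp: set_pmf_iff)
  have "(\<integral>\<^sup>+i. ennreal (?f i) \<partial>count_space UNIV) = (\<Sum>i\<in>set_pmf M. ennreal (?f i))"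
    using M by (intro nn_integral_count_space') (auto simp: set_pmf_iff)
  also have "\<dots> = ennreal (\<Sum>i\<in>set_pmf M. ?f i)"
    using f_nonneg by (intro sum_ennreal) auto
  also have "(\<Sum>i\<in>set_pmf M. ?f i) = 1"
    using E by (simp add: E_eq sum_divide_distrib[symmetric])
  finally have "(\<integral>\<^sup>+i. ennreal (?f i) \<partial>count_space UNIV) = 1" by simp
  then have pmf_eq: "pmf (reweight_pmf M r) j = ?f j" for j
    unfolding reweight_pmf_def by (rule pmf_embed_pmf[OF f_nonneg])
  then show "pmf (reweight_pmf M r) i = ?f i" .
  show "set_pmf (reweight_pmf M r) = set_pmf M"
    using r E by (fastforce simp: set_pmf_eq pmf_eq)
qed

lemma cond_on_event_bind_pmf:
  fixes M :: "'i pmf" and F G :: "'i \<Rightarrow> 'b pmf"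
  assumes \<delta>: "\<delta> < 1" and M: "finite (set_pmf M)"
    and r: "\<And>i. i \<in> set_pmf M \<Longrightarrow> 1 - \<delta> \<le> r i"
    and fin: "\<And>i. i \<in> set_pmf M \<Longrightarrow> finite (set_pmf (G i))"
    and le: "\<And>i s. i \<in> set_pmf M \<Longrightarrow> r i * pmf (G i) s \<le> pmf (F i) s"
  shows "cond_on_event \<delta> (bind_pmf M F) (bind_pmf (reweight_pmf M r) G)"
proof -
  let ?E = "measure_pmf.expectation M r"
  have E_eq: "?E = (\<Sum>i\<in>set_pmf M. pmf M i * r i)"
    using M by (subst integral_measure_pmf[of "set_pmf M"]) (auto simp: mult.commute)
  have "1 - \<delta> = (\<Sum>i\<in>set_pmf M. pmf M i * (1 - \<delta>))"
    using M by (simp add: sum_distrib_right[symmetric] sum_pmf_eq_1)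
  also have "\<dots> \<le> ?E"
    unfolding E_eq using r by (intro sum_mono mult_left_mono) auto
  finally have E: "1 - \<delta> \<le> ?E" .
  with \<delta> have E_pos: "0 < ?E" by linarith
  have r_pos: "i \<in> set_pmf M \<Longrightarrow> 0 < r i" for i using r[of i] \<delta> by linarith
  note reweight = pmf_reweight_pmf[OF M r_pos] set_pmf_reweight_pmf[OF M r_pos]
  show ?thesis
  proof (rule cond_on_event_if_scaled_le[OF _ E E_pos])
    show "finite (set_pmf (bind_pmf (reweight_pmf M r) G))"
      using reweight(2) M fin by (auto intro: finite_subset)
    fix s
    have "?E * pmf (bind_pmf (reweight_pmf M r) G) s = (\<Sum>i\<in>set_pmf M. pmf M i * (r i * pmf (G i) s))"
      using E_pos
      by (simp add: pmf_bind_pmf_eq_sum[OF M equalityD1[OF reweight(2)]] reweight(1)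
          sum_distrib_left mult.assoc)
    also have "\<dots> \<le> (\<Sum>i\<in>set_pmf M. pmf M i * pmf (F i) s)"
      using le by (intro sum_mono mult_left_mono) auto
    also have "\<dots> = pmf (bind_pmf M F) s"
      by (simp add: pmf_bind_pmf_eq_sum[OF M])
    finally show "?E * pmf (bind_pmf (reweight_pmf M r) G) s \<le> pmf (bind_pmf M F) s" .
  qed
qed

text \<open>The witnesses are the mixtures of P i and of G i with the common weights
  reweight_pmf M r: P' i is conditioned on an event of probability r i leaving G i, and P i
  on an independent coin of the same bias.\<close>
lemma bind_pmf_approx_renyi_close:
  fixes M :: "'i pmf" and P P' G :: "'i \<Rightarrow> 'b pmf"
  assumes \<delta>: "\<delta> < 1" and M: "finite (set_pmf M)"
    and r: "\<And>i. i \<in> set_pmf M \<Longrightarrow> 1 - \<delta> \<le> r i \<and> r i \<le> 1"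
    and supp: "\<And>i. i \<in> set_pmf M \<Longrightarrow> finite (set_pmf (P i)) \<and> set_pmf (G i) = set_pmf (P i)"
    and dominated: "\<And>i s. i \<in> set_pmf M \<Longrightarrow> r i * pmf (G i) s \<le> pmf (P' i) s"
    and renyi: "\<And>i \<alpha>. i \<in> set_pmf M \<Longrightarrow> 1 < \<alpha> \<Longrightarrow>
      (\<Sum>s\<in>set_pmf (P i). pmf (P i) s powr \<alpha> * pmf (G i) s powr (1 - \<alpha>)) \<le> exp ((\<alpha> - 1) * K \<alpha>) \<and>
      (\<Sum>s\<in>set_pmf (P i). pmf (G i) s powr \<alpha> * pmf (P i) s powr (1 - \<alpha>)) \<le> exp ((\<alpha> - 1) * K \<alpha>)"
  shows "\<exists>Q Q'. cond_on_event \<delta> (bind_pmf M P) Q \<and> cond_on_event \<delta> (bind_pmf M P') Q' \<and>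
    (\<forall>\<alpha>>1. renyi_div \<alpha> Q Q' \<le> ereal (K \<alpha>) \<and> renyi_div \<alpha> Q' Q \<le> ereal (K \<alpha>))"
proof (intro exI conjI allI impI)
  have "i \<in> set_pmf M \<Longrightarrow> 0 < r i" for i using r[of i] \<delta> by auto
  note reweight = set_pmf_reweight_pmf[OF M this]
  have "r i * pmf (P i) s \<le> pmf (P i) s" if "i \<in> set_pmf M" for i s
    using r[OF that] \<delta> by (intro mult_left_le_one_le) auto
  then show "cond_on_event \<delta> (bind_pmf M P) (bind_pmf (reweight_pmf M r) P)"
    using r supp by (intro cond_on_event_bind_pmf[OF \<delta> M]) auto
  show "cond_on_event \<delta> (bind_pmf M P') (bind_pmf (reweight_pmf M r) G)"
    using r supp dominated by (intro cond_on_event_bind_pmf[OF \<delta> M]) auto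
  fix \<alpha> :: real assume \<alpha>: "1 < \<alpha>"
  show "renyi_div \<alpha> (bind_pmf (reweight_pmf M r) P) (bind_pmf (reweight_pmf M r) G) \<le> ereal (K \<alpha>)"
    "renyi_div \<alpha> (bind_pmf (reweight_pmf M r) G) (bind_pmf (reweight_pmf M r) P) \<le> ereal (K \<alpha>)"
    using M supp renyi[OF _ \<alpha>] by (auto simp: reweight intro!: renyi_div_bind_pmf_le[OF \<alpha>])
qed

section \<open>Sets of independent coin flips\<close>

definition bernoulli_set_pmf :: "'a set \<Rightarrow> ('a \<Rightarrow> real) \<Rightarrow> 'a set pmf" where
  "bernoulli_set_pmf U q = map_pmf (\<lambda>f. {u \<in> U. f u}) (Pi_pmf U False (\<lambda>u. bernoulli_pmf (q u)))"

lemma pmf_bernoulli_set_pmf: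
  assumes U: "finite U" and q: "\<And>u. u \<in> U \<Longrightarrow> 0 \<le> q u \<and> q u \<le> 1"
  shows "pmf (bernoulli_set_pmf U q) s =
    (if s \<subseteq> U then \<Prod>u\<in>U. if u \<in> s then q u else 1 - q u else 0)"
proof -
  let ?P = "Pi_pmf U False (\<lambda>u. bernoulli_pmf (q u))"
  let ?F = "\<lambda>f. {u \<in> U. f u}"
  have "pmf (bernoulli_set_pmf U q) s = measure ?P (?F -` {s} \<inter> set_pmf ?P)"
    unfolding bernoulli_set_pmf_def pmf_map by (rule measure_Int_set_pmf[symmetric])
  also have "\<dots> = (if s \<subseteq> U then \<Prod>u\<in>U. if u \<in> s then q u else 1 - q u else 0)"
  proof (cases "s \<subseteq> U")
    case True
    \<comment> \<open>Outside U the sampled functions are False, so only the indicator of s maps to s.\<close>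
    have "?F -` {s} \<inter> set_pmf ?P = {\<lambda>u. u \<in> s} \<inter> set_pmf ?P"
      using True set_Pi_pmf_subset[OF U, of False "\<lambda>u. bernoulli_pmf (q u)"] by (auto simp: fun_eq_iff)
    then have "measure ?P (?F -` {s} \<inter> set_pmf ?P) = pmf ?P (\<lambda>u. u \<in> s)"
      by (simp add: measure_Int_set_pmf measure_pmf_single)
    also have "\<dots> = (\<Prod>u\<in>U. pmf (bernoulli_pmf (q u)) (u \<in> s))"
      using True by (subst pmf_Pi[OF U]) auto
    also have "\<dots> = (\<Prod>u\<in>U. if u \<in> s then q u else 1 - q u)"
      using q by (intro prod.cong refl) auto
    finally show ?thesis using True by simp
  next
    case False
    then have "?F -` {s} \<inter> set_pmf ?P = {}" by auto
    then show ?thesis using False by simp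
  qed
  finally show ?thesis .
qed

lemma set_pmf_bernoulli_set_pmf:
  assumes U: "finite U" and q: "\<And>u. u \<in> U \<Longrightarrow> 0 < q u \<and> q u < 1"
  shows "set_pmf (bernoulli_set_pmf U q) = Pow U"
proof -
  have "(\<Prod>u\<in>U. if u \<in> s then q u else 1 - q u) \<noteq> 0" for s
    using q by (intro less_imp_neq[symmetric] prod_pos) auto
  then show ?thesis
    using q by (auto simp: set_pmf_iff pmf_bernoulli_set_pmf[OF U] less_imp_le split: if_splits)
qed

lemma bernoulli_set_pmf_powr_sum:
  assumes U: "finite U"
    and q: "\<And>u. u \<in> U \<Longrightarrow> 0 \<le> q1 u \<and> q1 u \<le> 1" "\<And>u. u \<in> U \<Longrightarrow> 0 \<le> q2 u \<and> q2 u \<le> 1"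
  shows "(\<Sum>s\<in>Pow U. pmf (bernoulli_set_pmf U q1) s powr \<alpha> * pmf (bernoulli_set_pmf U q2) s powr (1 - \<alpha>)) =
    (\<Prod>u\<in>U. q1 u powr \<alpha> * q2 u powr (1 - \<alpha>) + (1 - q1 u) powr \<alpha> * (1 - q2 u) powr (1 - \<alpha>))"
proof -
  let ?A = "\<lambda>u. q1 u powr \<alpha> * q2 u powr (1 - \<alpha>)"
  let ?B = "\<lambda>u. (1 - q1 u) powr \<alpha> * (1 - q2 u) powr (1 - \<alpha>)"
  have "pmf (bernoulli_set_pmf U q1) s powr \<alpha> * pmf (bernoulli_set_pmf U q2) s powr (1 - \<alpha>) =
      (\<Prod>u\<in>s. ?A u) * (\<Prod>u\<in>U - s. ?B u)" if s: "s \<subseteq> U" for s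
  proof -
    have "pmf (bernoulli_set_pmf U q1) s powr \<alpha> * pmf (bernoulli_set_pmf U q2) s powr (1 - \<alpha>) =
        (\<Prod>u\<in>U. if u \<in> s then ?A u else ?B u)"
      using s q by (simp add: pmf_bernoulli_set_pmf[OF U] prod_powr_distrib prod.distrib[symmetric]
          if_distrib[of "\<lambda>x. x powr _"]) (intro prod.cong; simp)
    also have "\<dots> = (\<Prod>u\<in>s. ?A u) * (\<Prod>u\<in>U - s. ?B u)"
      using s U by (simp add: prod.If_cases Int_absorb1 Diff_eq)
    finally show ?thesis .
  qed
  then have "(\<Sum>s\<in>Pow U. pmf (bernoulli_set_pmf U q1) s powr \<alpha> * pmf (bernoulli_set_pmf U q2) s powr (1 - \<alpha>)) =
      (\<Sum>s\<in>Pow U. (\<Prod>u\<in>s. ?A u) * (\<Prod>u\<in>U - s. ?B u))"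
    by (intro sum.cong) auto
  also have "\<dots> = (\<Prod>u\<in>U. ?A u + ?B u)"
    by (rule prod_add[OF U, symmetric])
  finally show ?thesis .
qed

lemma pmf_bernoulli_set_pmf_Un_ge:
  assumes U: "finite U" and w: "finite w"
    and q: "\<And>u. u \<in> U \<union> w \<Longrightarrow> 0 \<le> q u \<and> q u \<le> 1"
    and q_new: "\<And>u. u \<in> w - U \<Longrightarrow> q u = p"
  shows "(1 - p) ^ card (w - U) * pmf (bernoulli_set_pmf U q) s \<le> pmf (bernoulli_set_pmf (U \<union> w) q) s"
proof (cases "s \<subseteq> U")
  case True
  let ?F = "\<lambda>u. if u \<in> s then q u else 1 - q u"
  have "pmf (bernoulli_set_pmf (U \<union> w) q) s = (\<Prod>u\<in>U \<union> (w - U). ?F u)"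
    using True by (subst pmf_bernoulli_set_pmf) (use U w q in auto)
  also have "\<dots> = (\<Prod>u\<in>U. ?F u) * (\<Prod>u\<in>w - U. ?F u)"
    using U w by (intro prod.union_disjoint) auto
  also have "(\<Prod>u\<in>w - U. ?F u) = (\<Prod>u\<in>w - U. 1 - p)"
    using True q_new by (intro prod.cong) auto
  finally show ?thesis
    using True U q by (simp add: pmf_bernoulli_set_pmf mult.commute)
next
  case False
  then show ?thesis
    using U q by (simp add: pmf_bernoulli_set_pmf)
qed

section \<open>The Weighted Gaussian mechanism\<close>

lemma set_pmf_sample_user:
  assumes "w \<in> set_pmf (sample_user \<Delta>0 W)"
  shows "w \<subseteq> set W \<and> card w \<le> \<Delta>0"
proof (cases "card (set W) \<le> \<Delta>0")
  case False
  let ?C = "{A. A \<subseteq> set W \<and> card A = \<Delta>0}"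
  have "finite ?C" by (rule finite_subset[of _ "Pow (set W)"]) auto
  moreover have "?C \<noteq> {}"
    using False obtain_subset_with_card_n[of \<Delta>0 "set W"] by auto
  ultimately show ?thesis
    using assms False by (simp add: sample_user_def)
qed (use assms in \<open>simp add: sample_user_def\<close>)

lemma finite_set_pmf_sample_user: "finite (set_pmf (sample_user \<Delta>0 W))"
  by (rule finite_subset[of _ "Pow (set W)"]) (auto dest: set_pmf_sample_user)

lemma finite_set_pmf_sample_users: "finite (set_pmf (sample_users \<Delta>0 x))"
  by (induction x) (auto simp: finite_set_pmf_sample_user)

lemma finite_of_set_pmf_sample_users:
  "As \<in> set_pmf (sample_users \<Delta>0 x) \<Longrightarrow> w \<in> set As \<Longrightarrow> finite w"
proof (induction x arbitrary: As)
  case (Cons W x)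
  then obtain A As' where "A \<in> set_pmf (sample_user \<Delta>0 W)" "As' \<in> set_pmf (sample_users \<Delta>0 x)"
    "As = A # As'"
    by auto
  then show ?case
    using Cons set_pmf_sample_user[of A \<Delta>0 W] finite_subset[of A "set W"] by auto
qed simp

lemma sample_users_append:
  "sample_users \<Delta>0 (x @ y) =
     bind_pmf (sample_users \<Delta>0 x) (\<lambda>As. map_pmf (\<lambda>Bs. As @ Bs) (sample_users \<Delta>0 y))"
  by (induction x) (simp_all add: bind_return_pmf bind_return_pmf' map_pmf_def bind_assoc_pmf)

definition sample_split ::
    "nat \<Rightarrow> 'a list list \<Rightarrow> 'a list \<Rightarrow> 'a list list \<Rightarrow> ('a set list \<times> 'a set \<times> 'a set list) pmf" where
  "sample_split \<Delta>0 L W R =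
     bind_pmf (sample_users \<Delta>0 L) (\<lambda>A. bind_pmf (sample_user \<Delta>0 W) (\<lambda>w.
       map_pmf (\<lambda>B. (A, w, B)) (sample_users \<Delta>0 R)))"

lemma sample_users_eq_map_sample_split:
  "sample_users \<Delta>0 (L @ R) = map_pmf (\<lambda>(A, w, B). A @ B) (sample_split \<Delta>0 L W R)"
  "sample_users \<Delta>0 (L @ W # R) = map_pmf (\<lambda>(A, w, B). A @ w # B) (sample_split \<Delta>0 L W R)"
  by (simp_all add: sample_split_def sample_users_append map_bind_pmf bind_assoc_pmf
      bind_return_pmf map_pmf_def)

lemma finite_set_pmf_sample_split: "finite (set_pmf (sample_split \<Delta>0 L W R))"
  by (rule finite_subset[of _ "set_pmf (sample_users \<Delta>0 L) \<times> set_pmf (sample_user \<Delta>0 W) \<times>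
      set_pmf (sample_users \<Delta>0 R)"])
    (auto simp: sample_split_def finite_set_pmf_sample_users finite_set_pmf_sample_user)

lemma set_pmf_sample_split:
  assumes "(A, w, B) \<in> set_pmf (sample_split \<Delta>0 L W R)"
  shows "finite (\<Union>(set (A @ B))) \<and> finite w \<and> card w \<le> \<Delta>0"
  using assms
  by (auto simp: sample_split_def dest: finite_of_set_pmf_sample_users set_pmf_sample_user
      intro: finite_subset)

lemma hist_eq_0: "u \<notin> \<Union>(set As) \<Longrightarrow> hist As u = 0"
  unfolding hist_def by (induction As) auto

lemma hist_insert:
  "hist (A @ w # B) u = hist (A @ B) u + (if u \<in> w then 1 / sqrt (real (card w)) else 0)"
  by (simp add: hist_def)

lemma sum_hist_insert_diff_sq_le:
  assumes V: "finite V" and w: "finite w"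
  shows "(\<Sum>u\<in>V. (hist (A @ w # B) u - hist (A @ B) u)\<^sup>2) \<le> 1"
proof -
  have "(\<Sum>u\<in>V. (hist (A @ w # B) u - hist (A @ B) u)\<^sup>2) =
      (\<Sum>u\<in>V. if u \<in> w then 1 / real (card w) else 0)"
    by (intro sum.cong refl) (simp add: hist_insert power_divide)
  also have "\<dots> = (\<Sum>u\<in>V \<inter> w. 1 / real (card w))"
    using V by (simp add: sum.If_cases Int_def)
  also have "\<dots> = real (card (V \<inter> w)) / real (card w)" by simp
  also have "\<dots> \<le> 1"
    using w card_mono[OF w, of "V \<inter> w"] by (cases "card w = 0") (simp_all add: divide_le_eq_1 card_gt_0_iff)
  finally show ?thesis .
qed

definition wg_release :: "real \<Rightarrow> real \<Rightarrow> nat \<Rightarrow> 'a set \<Rightarrow> 'a set list \<Rightarrow> 'a set pmf" where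
  "wg_release \<rho> \<delta> \<Delta>0 V As =
     bernoulli_set_pmf V (\<lambda>u. pass_prob (wg_sigma \<rho>) (wg_threshold \<rho> \<delta> \<Delta>0) (hist As u))"

lemma WG_eq_bind_wg_release:
  "WG \<rho> \<delta> \<Delta>0 x = bind_pmf (sample_users \<Delta>0 x) (\<lambda>As. wg_release \<rho> \<delta> \<Delta>0 (\<Union>(set As)) As)"
  by (simp add: WG_def wg_release_def bernoulli_set_pmf_def)

lemma WG_append_eq_bind_sample_split:
  "WG \<rho> \<delta> \<Delta>0 (L @ R) = bind_pmf (sample_split \<Delta>0 L W R)
     (\<lambda>(A, w, B). wg_release \<rho> \<delta> \<Delta>0 (\<Union>(set (A @ B))) (A @ B))"
  by (simp only: WG_eq_bind_wg_release sample_users_eq_map_sample_split(1)[where W = W])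
    (simp add: bind_map_pmf case_prod_unfold)

lemma WG_insert_eq_bind_sample_split:
  "WG \<rho> \<delta> \<Delta>0 (L @ W # R) = bind_pmf (sample_split \<Delta>0 L W R)
     (\<lambda>(A, w, B). wg_release \<rho> \<delta> \<Delta>0 (\<Union>(set (A @ w # B))) (A @ w # B))"
  by (simp only: WG_eq_bind_wg_release sample_users_eq_map_sample_split(2))
    (simp add: bind_map_pmf case_prod_unfold)

lemma pass_prob_wg_sigma_bounds:
  "0 < \<rho> \<Longrightarrow> 0 < pass_prob (wg_sigma \<rho>) T h \<and> pass_prob (wg_sigma \<rho>) T h < 1"
  using pass_prob_gt_0 pass_prob_lt_1 by (simp add: wg_sigma_def)

lemma set_pmf_wg_release: "0 < \<rho> \<Longrightarrow> finite V \<Longrightarrow> set_pmf (wg_release \<rho> \<delta> \<Delta>0 V As) = Pow V"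
  unfolding wg_release_def by (intro set_pmf_bernoulli_set_pmf pass_prob_wg_sigma_bounds)

lemma wg_release_renyi_sum_le:
  assumes \<rho>: "0 < \<rho>" and \<alpha>: "1 < \<alpha>" and V: "finite V"
    and sensitivity: "(\<Sum>u\<in>V. (hist As u - hist Bs u)\<^sup>2) \<le> 1"
  shows "(\<Sum>s\<in>Pow V. pmf (wg_release \<rho> \<delta> \<Delta>0 V As) s powr \<alpha> * pmf (wg_release \<rho> \<delta> \<Delta>0 V Bs) s powr (1 - \<alpha>))
    \<le> exp ((\<alpha> - 1) * (\<rho> * \<alpha>))"
proof -
  let ?\<sigma> = "wg_sigma \<rho>" and ?T = "wg_threshold \<rho> \<delta> \<Delta>0"
  let ?a = "\<lambda>u. pass_prob ?\<sigma> ?T (hist As u)" and ?b = "\<lambda>u. pass_prob ?\<sigma> ?T (hist Bs u)"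
  have \<sigma>: "0 < ?\<sigma>" and \<sigma>_sq: "2 * ?\<sigma>\<^sup>2 = 1 / \<rho>"
    using \<rho> by (simp_all add: wg_sigma_def power_divide)
  have "(\<Sum>s\<in>Pow V. pmf (wg_release \<rho> \<delta> \<Delta>0 V As) s powr \<alpha> * pmf (wg_release \<rho> \<delta> \<Delta>0 V Bs) s powr (1 - \<alpha>)) =
      (\<Prod>u\<in>V. ?a u powr \<alpha> * ?b u powr (1 - \<alpha>) + (1 - ?a u) powr \<alpha> * (1 - ?b u) powr (1 - \<alpha>))"
    unfolding wg_release_def using pass_prob_wg_sigma_bounds[OF \<rho>]
    by (intro bernoulli_set_pmf_powr_sum[OF V]) (auto intro: less_imp_le)
  also have "\<dots> \<le> (\<Prod>u\<in>V. exp (\<alpha> * (\<alpha> - 1) * \<rho> * (hist As u - hist Bs u)\<^sup>2))"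
    using pass_prob_renyi_sum_le[OF \<sigma> \<alpha>] \<sigma>_sq by (intro prod_mono) (auto simp: mult_ac)
  also have "\<dots> = exp (\<alpha> * (\<alpha> - 1) * \<rho> * (\<Sum>u\<in>V. (hist As u - hist Bs u)\<^sup>2))"
    by (simp add: exp_sum[OF V, symmetric] sum_distrib_left)
  also have "\<dots> \<le> exp ((\<alpha> - 1) * (\<rho> * \<alpha>))"
    using \<alpha> \<rho> mult_left_mono[OF sensitivity, of "\<alpha> * (\<alpha> - 1) * \<rho>"] by (simp add: mult_ac)
  finally show ?thesis .
qed

text \<open>This is what the threshold is chosen for: the j \<le> k items of weight 1/sqrt k that only
  the added user holds all fail with probability at least ((1 - \<delta>) powr (1/k))^j.\<close>
lemma wg_threshold_new_items_fail:
  assumes \<rho>: "0 < \<rho>" and \<delta>: "0 < \<delta>" "\<delta> < 1" and w: "finite w" "card w \<le> \<Delta>0"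
  shows "1 - \<delta> \<le>
    (1 - pass_prob (wg_sigma \<rho>) (wg_threshold \<rho> \<delta> \<Delta>0) (1 / sqrt (real (card w)))) ^ card (w - V)"
proof (cases "w - V = {}")
  case False
  let ?\<sigma> = "wg_sigma \<rho>" and ?T = "wg_threshold \<rho> \<delta> \<Delta>0"
  define k where "k = card w"
  define j where "j = card (w - V)"
  define p where "p = (1 - \<delta>) powr (1 / real k)"
  have \<sigma>: "0 < ?\<sigma>" using \<rho> by (simp add: wg_sigma_def)
  have jk: "1 \<le> j" "j \<le> k"
    using False w(1) card_mono[OF w(1), of "w - V"] by (auto simp: j_def k_def Suc_le_eq card_gt_0_iff)
  have p: "0 < p" "p < 1"
    unfolding p_def using \<delta> jk powr_less_mono2[of "1 / real k" "1 - \<delta>" 1] by auto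
  have "1 / sqrt (real k) + ?\<sigma> * Phi_inv p \<le> ?T"
    unfolding wg_threshold_def p_def using jk w by (intro Max_ge) (auto simp: k_def)
  then have "Phi_inv p \<le> (?T - 1 / sqrt (real k)) / ?\<sigma>"
    using \<sigma> by (simp add: field_simps)
  then have "Phi (Phi_inv p) \<le> Phi ((?T - 1 / sqrt (real k)) / ?\<sigma>)"
    by (rule monoD[OF strict_mono_mono[OF Phi_strict_mono]])
  then have "p \<le> 1 - pass_prob ?\<sigma> ?T (1 / sqrt (real k))"
    by (simp add: Phi_Phi_inv[OF p] one_minus_pass_prob_eq_Phi[OF \<sigma>])
  then have "p ^ j \<le> (1 - pass_prob ?\<sigma> ?T (1 / sqrt (real k))) ^ j"
    using p by (intro power_mono) auto
  moreover have "1 - \<delta> \<le> p ^ j"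
  proof -
    have "1 - \<delta> = (1 - \<delta>) powr 1" using \<delta> by simp
    also have "\<dots> \<le> (1 - \<delta>) powr (real j / real k)"
      using jk \<delta> by (intro powr_mono') auto
    also have "\<dots> = p ^ j"
      unfolding p_def using \<delta> by (simp add: powr_powr powr_realpow[symmetric])
    finally show ?thesis .
  qed
  ultimately show ?thesis by (simp add: j_def k_def)
next
  case True
  show ?thesis unfolding True using \<delta> by simp
qed

lemma pmf_wg_release_add_user_ge:
  assumes \<rho>: "0 < \<rho>" and U: "finite (\<Union>(set (A @ B)))" and w: "finite w"
  shows "(1 - pass_prob (wg_sigma \<rho>) (wg_threshold \<rho> \<delta> \<Delta>0) (1 / sqrt (real (card w))))
        ^ card (w - \<Union>(set (A @ B)))
      * pmf (wg_release \<rho> \<delta> \<Delta>0 (\<Union>(set (A @ B))) (A @ w # B)) s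
    \<le> pmf (wg_release \<rho> \<delta> \<Delta>0 (\<Union>(set (A @ w # B))) (A @ w # B)) s"
proof -
  have "\<Union>(set (A @ w # B)) = \<Union>(set (A @ B)) \<union> w" by auto
  moreover have "hist (A @ w # B) u = 1 / sqrt (real (card w))" if "u \<in> w - \<Union>(set (A @ B))" for u
    using that by (simp add: hist_insert hist_eq_0)
  ultimately show ?thesis
    unfolding wg_release_def using pass_prob_wg_sigma_bounds[OF \<rho>]
    by (simp only:, intro pmf_bernoulli_set_pmf_Un_ge U w) (auto intro: less_imp_le)
qed

lemma WG_approx_zCDP_add_user:
  fixes L R :: "'a list list" and W :: "'a list"
  assumes \<rho>: "0 < \<rho>" and \<delta>: "0 < \<delta>" "\<delta> < 1"
  shows "\<exists>Q Q'. cond_on_event \<delta> (WG \<rho> \<delta> \<Delta>0 (L @ R)) Q \<and> cond_on_event \<delta> (WG \<rho> \<delta> \<Delta>0 (L @ W # R)) Q' \<and>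
           (\<forall>\<alpha>>1. renyi_div \<alpha> Q Q' \<le> ereal (\<rho> * \<alpha>) \<and> renyi_div \<alpha> Q' Q \<le> ereal (\<rho> * \<alpha>))"
  unfolding WG_insert_eq_bind_sample_split
  \<comment> \<open>separately, since the append equation also matches L @ W # R\<close>
  unfolding WG_append_eq_bind_sample_split[where W = W]
proof (rule bind_pmf_approx_renyi_close[OF \<delta>(2) finite_set_pmf_sample_split, where K = "\<lambda>\<alpha>. \<rho> * \<alpha>"
      and G = "\<lambda>(A, w, B). wg_release \<rho> \<delta> \<Delta>0 (\<Union>(set (A @ B))) (A @ w # B)"
      and r = "\<lambda>(A, w, B). (1 - pass_prob (wg_sigma \<rho>) (wg_threshold \<rho> \<delta> \<Delta>0) (1 / sqrt (real (card w))))
                ^ card (w - \<Union>(set (A @ B)))"], goal_cases)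
  case (1 j)
  obtain A w B where j: "j = (A, w, B)" by (cases j)
  with 1 have "finite w" "card w \<le> \<Delta>0" using set_pmf_sample_split by blast+
  then show ?case
    using pass_prob_wg_sigma_bounds[OF \<rho>]
    by (simp add: j wg_threshold_new_items_fail[OF \<rho> \<delta>] less_imp_le power_le_one)
next
  case (2 j)
  obtain A w B where j: "j = (A, w, B)" by (cases j)
  with 2 have "finite (\<Union>(set (A @ B)))" using set_pmf_sample_split by blast
  then show ?case by (simp add: j set_pmf_wg_release \<rho>)
next
  case (3 j s)
  obtain A w B where j: "j = (A, w, B)" by (cases j)
  with 3 have "finite (\<Union>(set (A @ B)))" "finite w" using set_pmf_sample_split by blast+
  then show ?case using pmf_wg_release_add_user_ge[OF \<rho>] by (simp add: j)
next
  case (4 j \<alpha>)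
  obtain A w B where j: "j = (A, w, B)" by (cases j)
  with 4 have fin: "finite (\<Union>(set (A @ B)))" "finite w" using set_pmf_sample_split by blast+
  have "(\<Sum>u\<in>\<Union>(set (A @ B)). (hist (A @ B) u - hist (A @ w # B) u)\<^sup>2) \<le> 1"
    using sum_hist_insert_diff_sq_le[OF fin] by (simp add: power2_commute)
  then show ?case
    using sum_hist_insert_diff_sq_le[OF fin] fin
    by (simp add: j set_pmf_wg_release \<rho> wg_release_renyi_sum_le[OF \<rho> \<open>1 < \<alpha>\<close>])
qed

theorem mainTheorem3:
  fixes \<rho> \<delta> :: real and \<Delta>0 :: nat
  assumes "\<rho> > 0" and "0 < \<delta>" and "\<delta> < 1"
  shows "approx_zCDP \<delta> \<rho> neighbors (WG \<rho> \<delta> \<Delta>0 :: 'a list list \<Rightarrow> 'a set pmf)"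
  unfolding approx_zCDP_def
proof (intro allI impI)
  fix x x' :: "'a list list"
  assume "neighbors x x'"
  then obtain L R W where "x = L @ R \<and> x' = L @ W # R \<or> x' = L @ R \<and> x = L @ W # R"
    unfolding neighbors_def add_user_def by (metis append_take_drop_id)
  then show "\<exists>Q Q'. cond_on_event \<delta> (WG \<rho> \<delta> \<Delta>0 x) Q \<and> cond_on_event \<delta> (WG \<rho> \<delta> \<Delta>0 x') Q' \<and>
      (\<forall>\<alpha>>1. renyi_div \<alpha> Q Q' \<le> ereal (\<rho> * \<alpha>) \<and> renyi_div \<alpha> Q' Q \<le> ereal (\<rho> * \<alpha>))"
    using WG_approx_zCDP_add_user[OF assms, where L = L and R = R and W = W] by blast
qed

end
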